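(* Let $X$ be a distance regular graph of diameter $d$, let $A_i$ be the adjacency matrix of its $i$-th distance graph ($i=0,\dots,d$), let $Y=\mathrm{LD}(X)$, and let $Y_i$ be the $i$-th distance digraph of $Y$. Then $A(Y_0)=I$, $A(Y_2)=D_h^TA_1D_t - I$, and $A(Y_i)=D_h^TA_{i-1}D_t$ for $i\in\{1,3,4,\dots,d+1\}$.
   Context: $X$ is a connected $k$-regular distance regular graph (for vertices $u,v$ at distance $\ell$, the number of vertices at distance $i$ from $u$ and $j$ from $v$ depends only on $i,j,\ell$). $A_i$ is the $01$-matrix with $(A_i)_{uv}=1$ iff $\mathrm{dist}_X(u,v)=i$. Each edge $\{a,b\}$ of $X$ is replaced by arcs $(a,b)$ and $(b,a)$; the line digraph $\mathrm{LD}(X)$ has the arcs as vertices, with an arc from $(a,b)$ to $(c,d)$ iff $b=c$. For a digraph $Y$, its $i$-th distance digraph $Y_i$ has the same vertex set, with $a$ adjacent to $b$ iff the directed distance from $a$ to $b$ in $Y$ is $i$; $A(\cdot)$ denotes the $01$-adjacency matrix. $D_t$ and $D_h$ have rows indexed by vertices of $X$ and columns by arcs: $(D_t)_{u,(a,b)}=1$ iff $u=a$, $(D_h)_{u,(a,b)}=1$ iff $u=b$, and $0$ otherwise. *)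

theory Defs
  imports Main
begin

fun walk :: "('a \<Rightarrow> 'a \<Rightarrow> bool) \<Rightarrow> nat \<Rightarrow> 'a \<Rightarrow> 'a \<Rightarrow> bool" where
  "walk R 0 u v = (u = v)"
| "walk R (Suc n) u v = (\<exists>w. R u w \<and> walk R n w v)"

definition has_dist :: "('a \<Rightarrow> 'a \<Rightarrow> bool) \<Rightarrow> nat \<Rightarrow> 'a \<Rightarrow> 'a \<Rightarrow> bool" where
  "has_dist R n u v \<longleftrightarrow> walk R n u v \<and> (\<forall>m<n. \<not> walk R m u v)"

definition simple_graph :: "'a set \<Rightarrow> ('a \<Rightarrow> 'a \<Rightarrow> bool) \<Rightarrow> bool" where
  "simple_graph V E \<longleftrightarrow> finite V \<and> (\<forall>u v. E u v \<longrightarrow> u \<in> V \<and> v \<in> V)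
     \<and> (\<forall>u v. E u v \<longrightarrow> E v u) \<and> (\<forall>u. \<not> E u u)"

definition connected_graph :: "'a set \<Rightarrow> ('a \<Rightarrow> 'a \<Rightarrow> bool) \<Rightarrow> bool" where
  "connected_graph V E \<longleftrightarrow> (\<forall>u\<in>V. \<forall>v\<in>V. \<exists>n. walk E n u v)"

definition regular_graph :: "'a set \<Rightarrow> ('a \<Rightarrow> 'a \<Rightarrow> bool) \<Rightarrow> nat \<Rightarrow> bool" where
  "regular_graph V E k \<longleftrightarrow> (\<forall>v\<in>V. card {w\<in>V. E v w} = k)"

definition distance_regular :: "'a set \<Rightarrow> ('a \<Rightarrow> 'a \<Rightarrow> bool) \<Rightarrow> bool" where
  "distance_regular V E \<longleftrightarrow>
     (\<forall>u\<in>V. \<forall>v\<in>V. \<forall>w\<in>V. \<forall>x\<in>V. \<forall>l i j.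
        has_dist E l u v \<and> has_dist E l w x \<longrightarrow>
        card {z\<in>V. has_dist E i u z \<and> has_dist E j v z} =
        card {z\<in>V. has_dist E i w z \<and> has_dist E j x z})"

definition diameter :: "'a set \<Rightarrow> ('a \<Rightarrow> 'a \<Rightarrow> bool) \<Rightarrow> nat" where
  "diameter V E = Max {n. \<exists>u\<in>V. \<exists>v\<in>V. has_dist E n u v}"

definition dist_mat :: "('a \<Rightarrow> 'a \<Rightarrow> bool) \<Rightarrow> nat \<Rightarrow> 'a \<Rightarrow> 'a \<Rightarrow> int" where
  "dist_mat R i u v = (if has_dist R i u v then 1 else 0)"

definition arcs :: "('a \<Rightarrow> 'a \<Rightarrow> bool) \<Rightarrow> ('a \<times> 'a) set" where
  "arcs E = {(a, b). E a b}"

definition line_digraph :: "('a \<Rightarrow> 'a \<Rightarrow> bool) \<Rightarrow> ('a \<times> 'a) \<Rightarrow> ('a \<times> 'a) \<Rightarrow> bool" where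
  "line_digraph E p q \<longleftrightarrow> p \<in> arcs E \<and> q \<in> arcs E \<and> snd p = fst q"

definition D_t :: "'a \<Rightarrow> 'a \<times> 'a \<Rightarrow> int" where
  "D_t u p = (if u = fst p then 1 else 0)"

definition D_h :: "'a \<Rightarrow> 'a \<times> 'a \<Rightarrow> int" where
  "D_h u p = (if u = snd p then 1 else 0)"

text \<open>Matrices as functions; product sums over an explicit finite index set.\<close>
definition mat_mult :: "'m set \<Rightarrow> ('r \<Rightarrow> 'm \<Rightarrow> int) \<Rightarrow> ('m \<Rightarrow> 'c \<Rightarrow> int) \<Rightarrow> 'r \<Rightarrow> 'c \<Rightarrow> int" where
  "mat_mult M A B = (\<lambda>r c. \<Sum>m\<in>M. A r m * B m c)"

definition mat_transpose :: "('r \<Rightarrow> 'c \<Rightarrow> int) \<Rightarrow> 'c \<Rightarrow> 'r \<Rightarrow> int" where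
  "mat_transpose A = (\<lambda>c r. A r c)"

definition id_mat :: "'r \<Rightarrow> 'r \<Rightarrow> int" where
  "id_mat r c = (if r = c then 1 else 0)"

end

theory Submission
  imports Defs
begin

text \<open>A walk of length n+1 in LD(X) between arcs p and q is a walk of length n in X from the
  head of p to the tail of q, read off from the heads of the intermediate arcs. Hence for
  i \<ge> 1 the distance from p to q in LD(X) is one more than the distance from the head of p to the
  tail of q, except that p is at distance 0 from itself. In a simple graph the head of an arc
  is at distance exactly 1 from its tail, so this exception only affects Y_2, which explains the
  correction by the identity there.\<close>

lemma has_dist_unique:
  assumes "has_dist R m u v" "has_dist R n u v"
  shows "m = n"
  using assms unfolding has_dist_def by (metis linorder_neqE_nat)

lemma has_dist_Suc_0: "has_dist R (Suc 0) u v \<longleftrightarrow> R u v \<and> u \<noteq> v"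
  by (auto simp: has_dist_def)

lemma walk_line_digraph_Suc:
  assumes "p \<in> arcs E" "q \<in> arcs E"
  shows "walk (line_digraph E) (Suc n) p q \<longleftrightarrow> walk E n (snd p) (fst q)"
  using assms
proof (induction n arbitrary: p)
  case 0
  then show ?case by (cases q) (auto simp: line_digraph_def)
next
  case (Suc n)
  show ?case
  proof
    assume "walk (line_digraph E) (Suc (Suc n)) p q"
    then obtain w where w: "line_digraph E p w" "walk (line_digraph E) (Suc n) w q" by auto
    then have "w \<in> arcs E" by (simp add: line_digraph_def)
    with Suc w have "walk E n (snd w) (fst q)" by blast
    moreover have "E (snd p) (snd w)"
      using w(1) unfolding line_digraph_def arcs_def by (cases w) auto
    ultimately show "walk E (Suc n) (snd p) (fst q)" by auto
  next
    assume "walk E (Suc n) (snd p) (fst q)"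
    then obtain x where x: "E (snd p) x" "walk E n x (fst q)" by auto
    have arc: "(snd p, x) \<in> arcs E" using x by (simp add: arcs_def)
    then have "line_digraph E p (snd p, x)" using Suc.prems by (simp add: line_digraph_def)
    moreover have "walk (line_digraph E) (Suc n) (snd p, x) q"
      using Suc.IH[OF arc Suc.prems(2)] x by simp
    ultimately show "walk (line_digraph E) (Suc (Suc n)) p q" by auto
  qed
qed

lemma has_dist_line_digraph_Suc:
  assumes "p \<in> arcs E" "q \<in> arcs E"
  shows "has_dist (line_digraph E) (Suc n) p q \<longleftrightarrow> has_dist E n (snd p) (fst q) \<and> p \<noteq> q"
  using walk_line_digraph_Suc[OF assms]
  by (auto simp: has_dist_def less_Suc_eq_0_disj)

lemma has_dist_head_tail:
  assumes "\<And>u v. E u v \<Longrightarrow> E v u" "\<And>u. \<not> E u u" "p \<in> arcs E"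
  shows "has_dist E n (snd p) (fst p) \<longleftrightarrow> n = 1"
proof -
  have "has_dist E (Suc 0) (snd p) (fst p)"
    using assms by (auto simp: has_dist_Suc_0 arcs_def)
  then show ?thesis using has_dist_unique by fastforce
qed

lemma dist_mat_line_digraph_Suc:
  assumes "\<And>u v. E u v \<Longrightarrow> E v u" "\<And>u. \<not> E u u" "p \<in> arcs E" "q \<in> arcs E"
  shows "dist_mat (line_digraph E) (Suc n) p q
           = dist_mat E n (snd p) (fst q) - (if n = 1 then id_mat p q else 0)"
  using has_dist_line_digraph_Suc[OF assms(3,4), of n] has_dist_head_tail[OF assms(1-3), of n]
  by (cases "p = q") (auto simp: dist_mat_def id_mat_def)

lemma incidence_product_entry:
  assumes "finite V" "snd p \<in> V" "fst q \<in> V"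
  shows "mat_mult V (mat_mult V (mat_transpose D_h) M) D_t p q = M (snd p) (fst q)"
proof -
  have indicator_mult: "(if b then 1 else 0) * x = (if b then x else 0)"
    "x * (if b then 1 else 0) = (if b then x else 0)" for b and x :: int
    by simp_all
  have left: "mat_mult V (mat_transpose D_h) M p v = M (snd p) v" for v
    using assms by (simp add: mat_mult_def mat_transpose_def D_h_def indicator_mult cong: if_cong)
  show ?thesis
    using assms by (simp add: mat_mult_def[of V _ D_t] left D_t_def indicator_mult cong: if_cong)
qed

theorem lemma4p2:
  fixes V :: "'a set" and E :: "'a \<Rightarrow> 'a \<Rightarrow> bool" and k d :: nat
  assumes "simple_graph V E"
    and "connected_graph V E"
    and "regular_graph V E k"
    and "distance_regular V E"
    and "d = diameter V E"
  shows "(\<forall>p\<in>arcs E. \<forall>q\<in>arcs E.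
            dist_mat (line_digraph E) 0 p q = id_mat p q)
       \<and> (\<forall>p\<in>arcs E. \<forall>q\<in>arcs E.
            dist_mat (line_digraph E) 2 p q =
              mat_mult V (mat_mult V (mat_transpose D_h) (dist_mat E 1)) D_t p q - id_mat p q)
       \<and> (\<forall>i\<in>{1} \<union> {3..d+1}. \<forall>p\<in>arcs E. \<forall>q\<in>arcs E.
            dist_mat (line_digraph E) i p q =
              mat_mult V (mat_mult V (mat_transpose D_h) (dist_mat E (i - 1))) D_t p q)"
proof -
  have fin: "finite V" and sym: "\<And>u v. E u v \<Longrightarrow> E v u" and irrefl: "\<And>u. \<not> E u u"
    and in_V: "\<And>u v. E u v \<Longrightarrow> u \<in> V \<and> v \<in> V"
    using assms(1) unfolding simple_graph_def by blast+
  have product: "mat_mult V (mat_mult V (mat_transpose D_h) (dist_mat E n)) D_t p q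
                   = dist_mat E n (snd p) (fst q)" if "p \<in> arcs E" "q \<in> arcs E" for n p q
    using that in_V by (intro incidence_product_entry[OF fin]) (auto simp: arcs_def)
  have Y_Suc: "dist_mat (line_digraph E) (Suc n) p q
      = mat_mult V (mat_mult V (mat_transpose D_h) (dist_mat E n)) D_t p q
        - (if n = 1 then id_mat p q else 0)" if "p \<in> arcs E" "q \<in> arcs E" for n p q
    using dist_mat_line_digraph_Suc[OF sym irrefl that] product[OF that] by simp
  have "dist_mat (line_digraph E) 0 p q = id_mat p q" for p q
    by (simp add: dist_mat_def has_dist_def id_mat_def)
  moreover have "i - 1 \<noteq> 1 \<Longrightarrow> i \<noteq> 0 \<Longrightarrow> dist_mat (line_digraph E) i p q =
      mat_mult V (mat_mult V (mat_transpose D_h) (dist_mat E (i - 1))) D_t p q"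
    if "p \<in> arcs E" "q \<in> arcs E" for i p q
    using Y_Suc[OF that, of "i - 1"] by (cases i) auto
  ultimately show ?thesis
    using Y_Suc[of _ _ 1] by (auto simp: numeral_2_eq_2)
qed

end
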